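(* Let $F=F(N,\mathcal D)$ be a connected GSC and let $i,j\in\mathcal D$ be distinct. Then $\varphi_i(F)\cap\varphi_j(F)$ is a singleton if and only if there is exactly one pair $(i',j')\in\mathcal D\times\mathcal D$ such that $\varphi_{ii'}(F)\cap\varphi_{jj'}(F)\ne\varnothing$. Moreover, if this holds and $i'$ is a corner digit, then $j'$ is also a corner digit.
   Context: GSC: $N\ge2$, $\mathcal D\subset\{0,\dots,N-1\}^2$ with $1<|\mathcal D|<N^2$, $\varphi_i(x)=\frac1N(x+i)$, $F$ the attractor $F=\bigcup_{i\in\mathcal D}\varphi_i(F)$; $\varphi_{ii'}=\varphi_i\circ\varphi_{i'}$. A digit $i\in\mathcal D$ is a corner digit if $i\in\{(0,0),(0,N-1),(N-1,0),(N-1,N-1)\}$. *)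

theory Defs
  imports "HOL-Analysis.Analysis"
begin

definition gsc_map :: "nat \<Rightarrow> nat \<times> nat \<Rightarrow> real \<times> real \<Rightarrow> real \<times> real" where
  "gsc_map N i x = ((fst x + real (fst i)) / real N, (snd x + real (snd i)) / real N)"

definition gsc_digits :: "nat \<Rightarrow> (nat \<times> nat) set \<Rightarrow> bool" where
  "gsc_digits N D \<longleftrightarrow> 2 \<le> N \<and> D \<subseteq> {0..<N} \<times> {0..<N} \<and> 1 < card D \<and> card D < N ^ 2"

definition gsc_attractor :: "nat \<Rightarrow> (nat \<times> nat) set \<Rightarrow> (real \<times> real) set" where
  "gsc_attractor N D = (THE F. compact F \<and> F \<noteq> {} \<and> F = (\<Union>i\<in>D. gsc_map N i ` F))"

definition corner_digit :: "nat \<Rightarrow> nat \<times> nat \<Rightarrow> bool" where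
  "corner_digit N i \<longleftrightarrow> i \<in> {(0,0), (0,N-1), (N-1,0), (N-1,N-1)}"

end

theory Submission
  imports Defs
begin

text \<open>Coordinatewise, \<open>\<phi>\<^sub>i(x) = \<phi>\<^sub>j(y)\<close> means \<open>x + i = y + j\<close> with \<open>x, y\<close> in the unit
  square, so in a coordinate where \<open>i\<close> and \<open>j\<close> differ the two points have the extreme
  coordinates 0 and 1, and these pin down the level-two digits. If exactly one pair of level-two
  cells meets, the level-one preimages of two points of \<open>\<phi>\<^sub>i(F) \<inter> \<phi>\<^sub>j(F)\<close> either coincide
  or lie in that intersection again, so its diameter is at most its diameter divided by \<open>N\<close>.
  Conversely, if the intersection is a single point \<open>\<phi>\<^sub>i(u)\<close>, a second meeting pair of cells,
  or a corner digit \<open>i'\<close> next to a non-corner \<open>j'\<close>, yields a point of \<open>F\<close> other than \<open>u\<close>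
  (a preimage in one of the cells, or the fixed point of \<open>\<phi>\<^sub>i\<^sub>'\<close>) that \<open>\<phi>\<^sub>i\<close> also maps into the
  intersection.\<close>

lemma le_divide_imp_nonpos: "(x::real) \<le> x / c \<Longrightarrow> 1 < c \<Longrightarrow> x \<le> 0"
  by (cases "x \<le> 0") (auto simp: le_divide_eq)

lemma singleton_if_diameter_contracts:
  fixes S :: "'a::real_normed_vector set"
  assumes S: "bounded S" "S \<noteq> {}" and c: "1 < c"
    and contracts: "\<And>p q. p \<in> S \<Longrightarrow> q \<in> S \<Longrightarrow> dist p q \<le> diameter S / c"
  shows "\<exists>p. S = {p}"
proof -
  obtain p where p: "p \<in> S" using S(2) by blast
  have "diameter S \<le> diameter S / c"
    using S(2) contracts diameter_bounded_bound[OF S(1) p p] c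
    by (intro diameter_le) (auto simp: dist_norm)
  then have "diameter S \<le> 0" using c by (rule le_divide_imp_nonpos)
  then have "q = p" if "q \<in> S" for q
    using diameter_bounded_bound[OF S(1) that p] zero_less_dist_iff[of q p] by linarith
  with p show ?thesis by blast
qed

text \<open>Coordinates are indexed by \<open>bool\<close>, with \<open>\<not> k\<close> the other one, so that arguments
  symmetric in the two coordinates are written once.\<close>
definition coord :: "bool \<Rightarrow> 'a \<times> 'a \<Rightarrow> 'a" where
  "coord k x = (if k then fst x else snd x)"

lemma all_coord_iff: "(\<forall>k'. P k') \<longleftrightarrow> P k \<and> P (\<not> k)"
  by (cases k) (auto simp: all_bool_eq)

lemma prod_eq_iff_coord: "x = y \<longleftrightarrow> (\<forall>k. coord k x = coord k y)"
  by (auto simp: coord_def all_bool_eq prod_eq_iff)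

lemma coord_neq_other: "x \<noteq> y \<Longrightarrow> coord k x = coord k y \<Longrightarrow> coord (\<not> k) x \<noteq> coord (\<not> k) y"
  by (simp add: prod_eq_iff_coord all_coord_iff[of _ k])

lemma mem_unit_square_iff: "x \<in> {0..1} \<times> {0..1} \<longleftrightarrow> (\<forall>k. coord k x \<in> {0..(1::real)})"
  by (cases x) (auto simp: coord_def all_bool_eq)

lemma corner_digit_iff: "corner_digit N d \<longleftrightarrow> (\<forall>k. coord k d \<in> {0, N - 1})"
  by (cases d) (auto simp: corner_digit_def coord_def all_bool_eq)

lemma coord_gsc_map: "coord k (gsc_map N i x) = (coord k x + real (coord k i)) / real N"
  by (simp add: coord_def gsc_map_def)

lemma gsc_map_eq_gsc_map_iff:
  "N > 0 \<Longrightarrow> gsc_map N i x = gsc_map N j y \<longleftrightarrow>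
     (\<forall>k. coord k x + real (coord k i) = coord k y + real (coord k j))"
  by (simp add: prod_eq_iff_coord[of "gsc_map N i x"] coord_gsc_map divide_cancel_right)

lemma gsc_map_inj: "N > 0 \<Longrightarrow> gsc_map N i x = gsc_map N i y \<longleftrightarrow> x = y"
  by (simp add: gsc_map_eq_gsc_map_iff prod_eq_iff_coord[of x])

lemma dist_gsc_map: "dist (gsc_map N i x) (gsc_map N i y) = dist x y / real N"
proof -
  have "gsc_map N i x - gsc_map N i y = (1 / real N) *\<^sub>R (x - y)"
    by (cases x, cases y) (simp add: gsc_map_def add_divide_distrib diff_divide_distrib)
  then show ?thesis by (simp add: dist_norm)
qed

lemma continuous_on_gsc_map: "continuous_on S (gsc_map N i)"
  unfolding gsc_map_def divide_inverse by (intro continuous_intros)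

definition hutchinson :: "nat \<Rightarrow> (nat \<times> nat) set \<Rightarrow> (real \<times> real) set \<Rightarrow> (real \<times> real) set" where
  "hutchinson N D S = (\<Union>d\<in>D. gsc_map N d ` S)"

lemma hutchinson_mono: "S \<subseteq> T \<Longrightarrow> hutchinson N D S \<subseteq> hutchinson N D T"
  unfolding hutchinson_def by auto

lemma compact_hutchinson: "finite D \<Longrightarrow> compact S \<Longrightarrow> compact (hutchinson N D S)"
  unfolding hutchinson_def by (intro compact_UN compact_continuous_image continuous_on_gsc_map)

lemma hutchinson_unit_square:
  assumes "D \<subseteq> {0..<N} \<times> {0..<N}"
  shows "hutchinson N D ({0..1} \<times> {0..1}) \<subseteq> {0..1} \<times> {0..1}"
proof
  fix x assume "x \<in> hutchinson N D ({0..1} \<times> {0..1})"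
  then obtain d y where d: "d \<in> D" and y: "y \<in> {0..1} \<times> {0..1}" and x: "x = gsc_map N d y"
    by (auto simp: hutchinson_def)
  have "coord k x \<in> {0..1}" for k
  proof -
    have "real (coord k d) + 1 \<le> real N"
      using d assms by (cases k) (auto simp: coord_def)
    moreover have "coord k y \<in> {0..1}" using y by (simp add: mem_unit_square_iff)
    ultimately show ?thesis by (auto simp: x coord_gsc_map divide_simps)
  qed
  then show "x \<in> {0..1} \<times> {0..1}" by (simp add: mem_unit_square_iff)
qed

text \<open>Comparing the two sets along a point of \<open>G\<close> farthest from \<open>H\<close>: the contraction
  by \<open>1/N\<close> shows that this largest distance is at most itself divided by \<open>N\<close>.\<close>
lemma subset_if_hutchinson_invariant:
  assumes N: "N \<ge> 2" and G: "compact G" "G \<noteq> {}" "G \<subseteq> hutchinson N D G"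
    and H: "closed H" "H \<noteq> {}" "hutchinson N D H \<subseteq> H"
  shows "G \<subseteq> H"
proof -
  have "continuous_on G (\<lambda>x. infdist x H)" by (intro continuous_intros)
  then obtain x where x: "x \<in> G" and x_max: "\<And>y. y \<in> G \<Longrightarrow> infdist y H \<le> infdist x H"
    using continuous_attains_sup[OF G(1,2)] by blast
  obtain d g where d: "d \<in> D" and g: "g \<in> G" and xg: "x = gsc_map N d g"
    using x G(3) by (auto simp: hutchinson_def)
  obtain h where h: "h \<in> H" and gh: "infdist g H = dist g h"
    using infdist_attains_inf[OF H(1,2)] by blast
  have "gsc_map N d h \<in> H" using H(3) d h by (auto simp: hutchinson_def)
  then have "infdist x H \<le> dist x (gsc_map N d h)" by (rule infdist_le)
  also have "\<dots> = infdist g H / real N" by (simp add: xg dist_gsc_map gh)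
  also have "\<dots> \<le> infdist x H / real N" using x_max[OF g] by (simp add: divide_right_mono)
  finally have "infdist x H \<le> 0" by (rule le_divide_imp_nonpos) (use N in simp)
  then have "infdist y H = 0" if "y \<in> G" for y
    using x_max[OF that] infdist_nonneg[of y H] by linarith
  then show ?thesis using in_closed_iff_infdist_zero[OF H(1,2)] by blast
qed

lemma hutchinson_fixed_set_exists:
  assumes D: "D \<subseteq> {0..<N} \<times> {0..<N}" "finite D" "D \<noteq> {}" and N: "N > 0"
  obtains K where "compact K" "K \<noteq> {}" "hutchinson N D K = K" "K \<subseteq> {0..1} \<times> {0..1}"
proof -
  define Q where "Q n = (hutchinson N D ^^ n) ({0..1} \<times> {0..1})" for n
  have Q_Suc: "Q (Suc n) = hutchinson N D (Q n)" for n by (simp add: Q_def)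
  have compact_Q: "compact (Q n)" for n
    by (induction n) (auto simp: Q_def compact_Times compact_hutchinson D(2))
  have nonempty_Q: "Q n \<noteq> {}" for n
  proof (induction n)
    case (Suc n)
    then obtain y where "y \<in> Q n" by blast
    moreover obtain d where "d \<in> D" using D(3) by blast
    ultimately show ?case unfolding Q_Suc hutchinson_def by blast
  qed (simp add: Q_def)
  have "Q (Suc n) \<subseteq> Q n" for n
  proof (induction n)
    case 0
    show ?case by (simp add: Q_def hutchinson_unit_square[OF D(1)])
  next
    case (Suc n)
    then show ?case by (simp only: Q_Suc[of "Suc n"] Q_Suc[of n] hutchinson_mono)
  qed
  then have Q_anti: "m \<le> n \<Longrightarrow> Q n \<subseteq> Q m" for m n
    using decseqD[OF decseq_SucI] by blast
  define K where "K = (\<Inter>n. Q n)"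
  have "hutchinson N D K = K"
  proof
    have "hutchinson N D K \<subseteq> Q n" for n
    proof -
      have "hutchinson N D K \<subseteq> Q (Suc n)"
        unfolding Q_Suc K_def by (intro hutchinson_mono) blast
      then show ?thesis using Q_anti[of n "Suc n"] by simp
    qed
    then show "hutchinson N D K \<subseteq> K" by (auto simp: K_def)
    show "K \<subseteq> hutchinson N D K"
    proof
      fix x assume x: "x \<in> K"
      have "\<exists>d\<in>D. \<forall>n. x \<in> gsc_map N d ` Q n" \<comment> \<open>\<open>D\<close> is finite and the \<open>Q n\<close> decrease\<close>
      proof (rule ccontr)
        assume "\<not> ?thesis"
        then obtain f where f: "\<And>d. d \<in> D \<Longrightarrow> x \<notin> gsc_map N d ` Q (f d)" by metis
        define m where "m = Max (f ` D)"
        have "x \<in> Q (Suc m)" using x by (simp add: K_def)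
        then obtain d where d: "d \<in> D" and "x \<in> gsc_map N d ` Q m"
          by (auto simp: Q_Suc hutchinson_def)
        moreover have "Q m \<subseteq> Q (f d)" using d D(2) by (intro Q_anti) (simp add: m_def)
        ultimately show False using f[OF d] by blast
      qed
      then obtain d where d: "d \<in> D" and x_img: "\<And>n. x \<in> gsc_map N d ` Q n" by blast
      obtain y where y: "y \<in> Q 0" "x = gsc_map N d y" using x_img[of 0] by blast
      have "y \<in> Q n" for n
      proof -
        obtain y' where "y' \<in> Q n" "x = gsc_map N d y'" using x_img[of n] by blast
        with y(2) show ?thesis by (simp add: gsc_map_inj[OF N])
      qed
      then show "x \<in> hutchinson N D K" using d y(2) by (auto simp: K_def hutchinson_def)
    qed
  qed
  moreover have "compact K" unfolding K_def by (rule compact_Inter) (auto simp: compact_Q)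
  moreover have "K \<noteq> {}" unfolding K_def by (rule compact_nest) (auto simp: compact_Q nonempty_Q Q_anti)
  moreover have "K \<subseteq> {0..1} \<times> {0..1}" unfolding K_def using Q_def[of 0] by auto
  ultimately show ?thesis using that by blast
qed

lemma gsc_attractor_props:
  assumes "gsc_digits N D"
  shows "compact (gsc_attractor N D)" "gsc_attractor N D \<noteq> {}"
    "hutchinson N D (gsc_attractor N D) = gsc_attractor N D"
    "gsc_attractor N D \<subseteq> {0..1} \<times> {0..1}"
proof -
  have N: "N \<ge> 2" and D: "D \<subseteq> {0..<N} \<times> {0..<N}" "1 < card D"
    using assms by (auto simp: gsc_digits_def)
  have "finite D" "D \<noteq> {}" using D(2) card.infinite by fastforce+
  moreover have "N > 0" using N by simp
  ultimately obtain K where K: "compact K" "K \<noteq> {}" "hutchinson N D K = K" "K \<subseteq> {0..1} \<times> {0..1}"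
    using hutchinson_fixed_set_exists[OF D(1)] by blast
  have "gsc_attractor N D = K" unfolding gsc_attractor_def
  proof (rule the_equality)
    show "compact K \<and> K \<noteq> {} \<and> K = (\<Union>i\<in>D. gsc_map N i ` K)"
      using K by (simp add: hutchinson_def)
    fix G assume "compact G \<and> G \<noteq> {} \<and> G = (\<Union>i\<in>D. gsc_map N i ` G)"
    then have G: "compact G" "G \<noteq> {}" "hutchinson N D G = G" by (simp_all add: hutchinson_def)
    show "G = K"
    proof (rule subset_antisym)
      show "G \<subseteq> K" using subset_if_hutchinson_invariant[OF N G(1,2) equalityD2[OF G(3)]
          compact_imp_closed[OF K(1)] K(2) equalityD1[OF K(3)]] .
      show "K \<subseteq> G" using subset_if_hutchinson_invariant[OF N K(1,2) equalityD2[OF K(3)]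
          compact_imp_closed[OF G(1)] G(2) equalityD1[OF G(3)]] .
    qed
  qed
  with K show "compact (gsc_attractor N D)" "gsc_attractor N D \<noteq> {}"
    "hutchinson N D (gsc_attractor N D) = gsc_attractor N D"
    "gsc_attractor N D \<subseteq> {0..1} \<times> {0..1}" by simp_all
qed

definition gsc_fixpoint :: "nat \<Rightarrow> nat \<times> nat \<Rightarrow> real \<times> real" where
  "gsc_fixpoint N d = (real (fst d) / (real N - 1), real (snd d) / (real N - 1))"

lemma coord_gsc_fixpoint: "coord k (gsc_fixpoint N d) = real (coord k d) / (real N - 1)"
  by (simp add: coord_def gsc_fixpoint_def)

lemma gsc_fixpoint_mem:
  assumes N: "N \<ge> 2" and F: "closed F" "F \<noteq> {}" "hutchinson N D F \<subseteq> F" and d: "d \<in> D"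
  shows "gsc_fixpoint N d \<in> F"
proof -
  have "coord k (gsc_map N d (gsc_fixpoint N d)) = coord k (gsc_fixpoint N d)" for k
    using N by (simp add: coord_gsc_map coord_gsc_fixpoint field_simps)
  then have "gsc_map N d (gsc_fixpoint N d) = gsc_fixpoint N d"
    by (simp add: prod_eq_iff_coord[of "gsc_map N d _"])
  then have fixed: "{gsc_fixpoint N d} \<subseteq> hutchinson N {d} {gsc_fixpoint N d}"
    unfolding hutchinson_def by simp
  have "hutchinson N {d} F \<subseteq> F"
    using F(3) d unfolding hutchinson_def by blast
  then show ?thesis
    using subset_if_hutchinson_invariant[OF N compact_sing insert_not_empty fixed F(1,2)] by simp
qed

lemma unit_interval_shift_cases:
  fixes x y :: real and I J :: nat
  assumes "x \<in> {0..1}" "y \<in> {0..1}" "x + I = y + J"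
  shows "(I = J \<and> x = y) \<or> (J = I + 1 \<and> x = 1 \<and> y = 0) \<or> (I = J + 1 \<and> x = 0 \<and> y = 1)"
proof -
  have "real I \<le> real J + 1" "real J \<le> real I + 1" using assms by auto
  then have "I = J \<or> J = I + 1 \<or> I = J + 1" by linarith
  then show ?thesis using assms by auto
qed

lemma two_level_coord_cases:
  fixes x y :: real and a b i j N :: nat
  assumes N: "N \<ge> 2" and "a < N" "b < N" and xy: "x \<in> {0..1}" "y \<in> {0..1}"
    and eq: "(x + a) / N + i = (y + b) / N + j"
  shows "(i = j \<and> ((a = b \<and> x = y) \<or> (b = a + 1 \<and> x = 1 \<and> y = 0) \<or> (a = b + 1 \<and> x = 0 \<and> y = 1)))
    \<or> (j = i + 1 \<and> a = N - 1 \<and> b = 0 \<and> x = 1 \<and> y = 0)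
    \<or> (i = j + 1 \<and> a = 0 \<and> b = N - 1 \<and> x = 0 \<and> y = 1)"
proof -
  have N_pos: "real N > 0" using N by simp
  have "real a + 1 \<le> real N" "real b + 1 \<le> real N" using \<open>a < N\<close> \<open>b < N\<close> by linarith+
  then have "(x + a) / N \<in> {0..1}" "(y + b) / N \<in> {0..1}"
    using xy N_pos by (auto simp: divide_simps)
  from unit_interval_shift_cases[OF this eq] show ?thesis
  proof (elim disjE conjE)
    assume "i = j" "(x + a) / N = (y + b) / N"
    then have "x + a = y + b" using N_pos by (simp add: divide_cancel_right)
    with \<open>i = j\<close> show ?thesis using unit_interval_shift_cases[OF xy] by auto
  next
    assume "j = i + 1" "(x + a) / N = 1" "(y + b) / N = 0"
    then have "x + a = N" "y + b = 0" using N_pos by (simp_all add: divide_simps)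
    with \<open>j = i + 1\<close> show ?thesis using xy \<open>real a + 1 \<le> N\<close> by auto
  next
    assume "i = j + 1" "(x + a) / N = 0" "(y + b) / N = 1"
    then have "x + a = 0" "y + b = N" using N_pos by (simp_all add: divide_simps)
    with \<open>i = j + 1\<close> show ?thesis using xy \<open>real b + 1 \<le> N\<close> by auto
  qed
qed

lemma two_level_edge_coord:
  fixes x y :: real and a b i j N :: nat
  assumes "N \<ge> 2" "a < N" "b < N" "x \<in> {0..1}" "y \<in> {0..1}" "i \<noteq> j"
    and "(x + a) / N + i = (y + b) / N + j"
  shows "x = (if j = i + 1 then 1 else 0) \<and> y = (if j = i + 1 then 0 else 1) \<and> x + i = y + j
    \<and> real a = (if j = i + 1 then real N - 1 else 0) \<and> real b = (if j = i + 1 then 0 else real N - 1)"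
  using two_level_coord_cases[OF assms(1-5,7)] assms(1,6) by (auto simp: of_nat_diff)

lemma two_level_coord_pair:
  fixes x x' y y' :: real and a b i j N :: nat
  assumes "N \<ge> 2" "a < N" "b < N" "x \<in> {0..1}" "y \<in> {0..1}" "x' \<in> {0..1}" "y' \<in> {0..1}"
    and "(x + a) / N + i = (y + b) / N + j" "(x' + a) / N + i = (y' + b) / N + j"
  shows "(x = x' \<or> x + i = y + j \<and> x' + i = y' + j)
    \<and> (i \<noteq> j \<longrightarrow> x = x' \<and> x + i = y + j \<and> x' + i = y' + j)"
  using two_level_coord_cases[OF assms(1-5,8)] two_level_coord_cases[OF assms(1-3,6,7,9)]
  by auto

text \<open>Here \<open>(x + a) / N\<close> is the common endpoint of two adjacent cells, an inner grid point.\<close>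
lemma straddling_cells:
  fixes x x' y :: real and a a' b N :: nat
  assumes "x \<in> {0..1}" "x' \<in> {0..1}" "y \<in> {0..1}" "a < N" "a' < N" "a \<noteq> a'"
    and "x + a = x' + a'" "y + b = x + a"
  shows "y = x \<or> y = x'" "y \<in> {0, 1}" "(x + a) / N \<notin> {0, 1}"
  using unit_interval_shift_cases[OF assms(1,2,7)] unit_interval_shift_cases[OF assms(3,1,8)] assms(4-6)
  by (auto simp: divide_simps)

lemma corner_next_to_inner_digit:
  fixes x y :: real and a b N :: nat
  assumes "N \<ge> 2" "x \<in> {0..1}" "y \<in> {0..1}" "a \<in> {0, N - 1}" "b < N" "b \<notin> {0, N - 1}"
    and "x + a = y + b"
  shows "y = a / (real N - 1)" "(x + a) / N \<notin> {0, 1}"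
  using unit_interval_shift_cases[OF assms(2,3,7)] assms(1,4-6)
  by (auto simp: divide_simps of_nat_diff)

locale gsc_pair =
  fixes N :: nat and D :: "(nat \<times> nat) set" and F :: "(real \<times> real) set" and i j :: "nat \<times> nat"
  assumes N: "N \<ge> 2" and digits: "D \<subseteq> {0..<N} \<times> {0..<N}"
    and compact: "compact F" and nonempty: "F \<noteq> {}" and self_similar: "hutchinson N D F = F"
    and unit_square: "F \<subseteq> {0..1} \<times> {0..1}"
    and i: "i \<in> D" and j: "j \<in> D" and distinct: "i \<noteq> j"
begin

lemma N_pos: "N > 0"
  using N by simp

lemma gsc_pair_swap: "gsc_pair N D F j i"
  using N digits compact nonempty self_similar unit_square i j distinct by unfold_locales auto

lemma coord_mem_unit: "x \<in> F \<Longrightarrow> coord k x \<in> {0..1}"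
  using unit_square mem_unit_square_iff by blast

lemma coord_digit_less: "d \<in> D \<Longrightarrow> coord k d < N"
  using digits by (cases k) (auto simp: coord_def)

lemma obtain_subcell:
  assumes "u \<in> F"
  obtains d x where "d \<in> D" "x \<in> F" "u = gsc_map N d x"
  using assms self_similar unfolding hutchinson_def by blast

lemma gsc_map_mem: "d \<in> D \<Longrightarrow> x \<in> F \<Longrightarrow> gsc_map N d x \<in> F"
  using self_similar unfolding hutchinson_def by blast

abbreviation overlap :: "(real \<times> real) set" where
  "overlap \<equiv> gsc_map N i ` F \<inter> gsc_map N j ` F"

abbreviation subcells_meet :: "nat \<times> nat \<Rightarrow> nat \<times> nat \<Rightarrow> bool" where
  "subcells_meet a b \<equiv> (gsc_map N i \<circ> gsc_map N a) ` F \<inter> (gsc_map N j \<circ> gsc_map N b) ` F \<noteq> {}"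

lemma subcells_meet_iff:
  "subcells_meet a b \<longleftrightarrow> (\<exists>x\<in>F. \<exists>y\<in>F. gsc_map N i (gsc_map N a x) = gsc_map N j (gsc_map N b y))"
  by (auto simp: image_iff) metis

lemma coord_level_two_eq:
  assumes "gsc_map N i (gsc_map N a x) = gsc_map N j (gsc_map N b y)"
  shows "(coord k x + coord k a) / N + coord k i = (coord k y + coord k b) / N + coord k j"
  using assms by (simp add: gsc_map_eq_gsc_map_iff[OF N_pos] coord_gsc_map)

lemma level_two_point_mem_overlap:
  assumes "a \<in> D" "b \<in> D" "x \<in> F" "y \<in> F"
    and meet: "gsc_map N i (gsc_map N a x) = gsc_map N j (gsc_map N b y)"
  shows "gsc_map N i (gsc_map N a x) \<in> overlap"
proof (rule IntI)
  show "gsc_map N i (gsc_map N a x) \<in> gsc_map N i ` F"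
    using gsc_map_mem[OF assms(1,3)] by (rule imageI)
  show "gsc_map N i (gsc_map N a x) \<in> gsc_map N j ` F"
    unfolding meet using gsc_map_mem[OF assms(2,4)] by (rule imageI)
qed

lemma obtain_level_two_representation:
  assumes "p \<in> overlap"
  obtains a b x y where "a \<in> D" "b \<in> D" "x \<in> F" "y \<in> F" "p = gsc_map N i (gsc_map N a x)"
    "gsc_map N i (gsc_map N a x) = gsc_map N j (gsc_map N b y)"
proof -
  obtain u v where "u \<in> F" "v \<in> F" and p: "p = gsc_map N i u" "p = gsc_map N j v"
    using assms by blast
  obtain a x where "a \<in> D" "x \<in> F" "u = gsc_map N a x"
    using obtain_subcell[OF \<open>u \<in> F\<close>] .
  moreover obtain b y where "b \<in> D" "y \<in> F" "v = gsc_map N b y"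
    using obtain_subcell[OF \<open>v \<in> F\<close>] .
  ultimately show ?thesis using that p by simp
qed

lemma overlap_preimage:
  assumes "overlap = {gsc_map N i u}" "w \<in> F" "y \<in> F"
    and "\<forall>k. coord k w + coord k i = coord k y + coord k j"
  shows "w = u"
proof -
  have "gsc_map N i w = gsc_map N j y"
    using assms(4) by (simp add: gsc_map_eq_gsc_map_iff[OF N_pos])
  then have "gsc_map N i w \<in> overlap" using assms(2,3) by blast
  with assms(1) show "w = u" by (simp add: gsc_map_inj[OF N_pos])
qed

text \<open>If \<open>u\<close> lay in two subcells, it would sit on an inner grid line; one of its two preimages
  then matches \<open>y\<close> in that coordinate and is a second preimage of the overlap point.\<close>
lemma subcell_digit_unique:
  assumes overlap: "overlap = {gsc_map N i u}"
    and u: "u = gsc_map N a x" "u = gsc_map N a' x'"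
    and meet: "gsc_map N i u = gsc_map N j (gsc_map N b y)"
    and "a \<in> D" "a' \<in> D" "b \<in> D" and "x \<in> F" "x' \<in> F" "y \<in> F"
  shows "a = a'"
proof (rule ccontr)
  assume "a \<noteq> a'"
  then obtain k where a_k: "coord k a \<noteq> coord k a'"
    unfolding prod_eq_iff_coord[of a] by auto
  note less = coord_digit_less[OF \<open>a \<in> D\<close>] coord_digit_less[OF \<open>a' \<in> D\<close>]
    coord_digit_less[OF \<open>b \<in> D\<close>]
  note unit = coord_mem_unit[OF \<open>x \<in> F\<close>] coord_mem_unit[OF \<open>x' \<in> F\<close>]
    coord_mem_unit[OF \<open>y \<in> F\<close>]
  note eq = coord_level_two_eq[OF meet[unfolded u(1)]]
    and eq' = coord_level_two_eq[OF meet[unfolded u(2)]]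
  show False
  proof (cases "coord k i = coord k j")
    case False
    then show False
      using two_level_edge_coord[OF N less(1,3) unit(1,3) False eq[of k]]
        two_level_edge_coord[OF N less(2,3) unit(2,3) False eq'[of k]] a_k by simp
  next
    case True
    define c where "c = (\<not> k)"
    have "coord c i \<noteq> coord c j" unfolding c_def using coord_neq_other[OF distinct True] .
    note edge = two_level_edge_coord[OF N less(1,3) unit(1,3) this eq[of c]]
      two_level_edge_coord[OF N less(2,3) unit(2,3) this eq'[of c]]
    have "gsc_map N a x = gsc_map N a' x'" using u(1)[symmetric] u(2) by (rule trans)
    then have "coord k x + coord k a = coord k x' + coord k a'"
      by (simp add: gsc_map_eq_gsc_map_iff[OF N_pos])
    moreover have "coord k y + coord k b = coord k x + coord k a"
      using eq[of k] True N_pos by (simp add: divide_cancel_right)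
    ultimately have straddle: "coord k y = coord k x \<or> coord k y = coord k x'"
        "coord k y \<in> {0, 1}" "(coord k x + coord k a) / N \<notin> {0, 1}"
      by (rule straddling_cells[OF unit(1,2,3) less(1,2) a_k])+
    from straddle(1) have "\<exists>w\<in>{x, x'}. coord k w = coord k y" by auto
    then obtain w where w: "w \<in> {x, x'}" "coord k w = coord k y" ..
    then have "w \<in> F" using \<open>x \<in> F\<close> \<open>x' \<in> F\<close> by blast
    have "coord c w = coord c x" using w(1) edge by auto
    then have "coord c w + coord c i = coord c y + coord c j" using edge by simp
    with w(2) True have "\<forall>k'. coord k' w + coord k' i = coord k' y + coord k' j"
      unfolding c_def all_coord_iff[of _ k] by simp
    with \<open>w \<in> F\<close> have "w = u" by (intro overlap_preimage[OF overlap _ \<open>y \<in> F\<close>])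
    then have "coord k y = (coord k x + coord k a) / N"
      using w(2) u(1) by (simp add: coord_gsc_map)
    with straddle(2,3) show False by auto
  qed
qed

lemma unique_subcells_if_overlap_singleton:
  assumes overlap: "overlap = {p}"
  shows "\<exists>!q. q \<in> D \<times> D \<and> subcells_meet (fst q) (snd q)"
proof -
  have "p \<in> overlap" using overlap by simp
  then obtain a b x y where ab: "a \<in> D" "b \<in> D" "x \<in> F" "y \<in> F"
    and p: "p = gsc_map N i (gsc_map N a x)"
    and meet: "gsc_map N i (gsc_map N a x) = gsc_map N j (gsc_map N b y)"
    by (rule obtain_level_two_representation)
  show ?thesis
  proof (rule ex1I[of _ "(a, b)"])
    show "(a, b) \<in> D \<times> D \<and> subcells_meet (fst (a, b)) (snd (a, b))"
      using ab meet unfolding subcells_meet_iff by auto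
  next
    fix q assume q: "q \<in> D \<times> D \<and> subcells_meet (fst q) (snd q)"
    then obtain x' y' where "x' \<in> F" "y' \<in> F"
      and meet': "gsc_map N i (gsc_map N (fst q) x') = gsc_map N j (gsc_map N (snd q) y')"
      unfolding subcells_meet_iff by blast
    then have "gsc_map N i (gsc_map N (fst q) x') \<in> overlap"
      using q by (intro level_two_point_mem_overlap) auto
    then have p': "gsc_map N i (gsc_map N (fst q) x') = p" using overlap by simp
    then have u: "gsc_map N a x = gsc_map N (fst q) x'"
      using p by (simp add: gsc_map_inj[OF N_pos])
    have "gsc_map N j (gsc_map N b y) = gsc_map N j (gsc_map N (snd q) y')"
      using meet meet' p p' by simp
    then have v: "gsc_map N b y = gsc_map N (snd q) y'"
      by (simp add: gsc_map_inj[OF N_pos])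
    have "fst q \<in> D" "snd q \<in> D" using q by auto
    have "overlap = {gsc_map N i (gsc_map N a x)}" using overlap p by simp
    from subcell_digit_unique[OF this refl u meet ab(1) \<open>fst q \<in> D\<close> ab(2,3) \<open>x' \<in> F\<close> ab(4)]
    have "a = fst q" .
    have "gsc_map N j ` F \<inter> gsc_map N i ` F = {gsc_map N j (gsc_map N b y)}"
      using overlap p meet by (simp add: Int_commute)
    from gsc_pair.subcell_digit_unique[OF gsc_pair_swap this refl v meet[symmetric] ab(2)
        \<open>snd q \<in> D\<close> ab(1,4) \<open>y' \<in> F\<close> ab(3)]
    have "b = snd q" .
    with \<open>a = fst q\<close> show "q = (a, b)" by auto
  qed
qed

lemma level_two_representations:
  assumes "a \<in> D" "b \<in> D" "x \<in> F" "y \<in> F" "x' \<in> F" "y' \<in> F"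
    and meet: "gsc_map N i (gsc_map N a x) = gsc_map N j (gsc_map N b y)"
    and meet': "gsc_map N i (gsc_map N a x') = gsc_map N j (gsc_map N b y')"
  shows "x = x' \<or> gsc_map N i x = gsc_map N j y \<and> gsc_map N i x' = gsc_map N j y'"
proof -
  have coords: "(coord k x = coord k x' \<or>
        coord k x + coord k i = coord k y + coord k j \<and> coord k x' + coord k i = coord k y' + coord k j)
      \<and> (coord k i \<noteq> coord k j \<longrightarrow> coord k x = coord k x' \<and>
        coord k x + coord k i = coord k y + coord k j \<and> coord k x' + coord k i = coord k y' + coord k j)"
    for k
    using two_level_coord_pair[OF N coord_digit_less[OF assms(1)] coord_digit_less[OF assms(2)]
        coord_mem_unit[OF assms(3)] coord_mem_unit[OF assms(4)] coord_mem_unit[OF assms(5)]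
        coord_mem_unit[OF assms(6)] coord_level_two_eq[OF meet] coord_level_two_eq[OF meet']] .
  obtain k where "coord k i \<noteq> coord k j"
    using distinct unfolding prod_eq_iff_coord[of i] by auto
  with coords[of k] coords[of "\<not> k"] show ?thesis
    unfolding gsc_map_eq_gsc_map_iff[OF N_pos] prod_eq_iff_coord[of x] all_coord_iff[of _ k]
    by blast
qed

lemma overlap_singleton_if_unique_subcells:
  assumes "a \<in> D" "b \<in> D" "subcells_meet a b"
    and unique: "\<And>a' b'. a' \<in> D \<Longrightarrow> b' \<in> D \<Longrightarrow> subcells_meet a' b' \<Longrightarrow> a' = a \<and> b' = b"
  shows "\<exists>p. overlap = {p}"
proof (rule singleton_if_diameter_contracts)
  show "bounded overlap"
  proof (rule bounded_subset)
    show "bounded (gsc_map N i ` ({0..1} \<times> {0..1}))"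
      by (intro compact_imp_bounded compact_continuous_image continuous_on_gsc_map
          compact_Times compact_Icc)
    show "overlap \<subseteq> gsc_map N i ` ({0..1} \<times> {0..1})" using unit_square by auto
  qed
  obtain x y where "x \<in> F" "y \<in> F" "gsc_map N i (gsc_map N a x) = gsc_map N j (gsc_map N b y)"
    using \<open>subcells_meet a b\<close> unfolding subcells_meet_iff by blast
  then show "overlap \<noteq> {}" using level_two_point_mem_overlap[OF assms(1,2)] by blast
  show "1 < real N" using N by simp
  have representation: "\<exists>x y. x \<in> F \<and> y \<in> F \<and> p = gsc_map N i (gsc_map N a x)
      \<and> gsc_map N i (gsc_map N a x) = gsc_map N j (gsc_map N b y)" if p_mem: "p \<in> overlap" for p
  proof -
    obtain a' b' x y where "a' \<in> D" "b' \<in> D" "x \<in> F" "y \<in> F"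
      and p: "p = gsc_map N i (gsc_map N a' x)"
      and meet: "gsc_map N i (gsc_map N a' x) = gsc_map N j (gsc_map N b' y)"
      by (rule obtain_level_two_representation[OF p_mem])
    moreover have "subcells_meet a' b'"
      unfolding subcells_meet_iff using \<open>x \<in> F\<close> \<open>y \<in> F\<close> meet by blast
    ultimately have "a' = a" "b' = b" using unique by blast+
    then show ?thesis using \<open>x \<in> F\<close> \<open>y \<in> F\<close> p meet by blast
  qed
  fix p q assume "p \<in> overlap" "q \<in> overlap"
  then obtain x y x' y' where "x \<in> F" "y \<in> F" "x' \<in> F" "y' \<in> F"
    and p: "p = gsc_map N i (gsc_map N a x)"
    and meet: "gsc_map N i (gsc_map N a x) = gsc_map N j (gsc_map N b y)"
    and q: "q = gsc_map N i (gsc_map N a x')"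
    and meet': "gsc_map N i (gsc_map N a x') = gsc_map N j (gsc_map N b y')"
    using representation by metis
  from level_two_representations[OF assms(1,2) this(1-4) meet meet']
  show "dist p q \<le> diameter overlap / N"
  proof
    assume "x = x'"
    then show ?thesis using p q diameter_ge_0[OF \<open>bounded overlap\<close>] by simp
  next
    assume "gsc_map N i x = gsc_map N j y \<and> gsc_map N i x' = gsc_map N j y'"
    then have "gsc_map N i x \<in> overlap" "gsc_map N i x' \<in> overlap"
      using \<open>x \<in> F\<close> \<open>y \<in> F\<close> \<open>x' \<in> F\<close> \<open>y' \<in> F\<close> by (metis IntI imageI)+
    then have "dist (gsc_map N i x) (gsc_map N i x') \<le> diameter overlap"
      by (rule diameter_bounded_bound[OF \<open>bounded overlap\<close>])
    moreover have "dist p q = dist (gsc_map N i x) (gsc_map N i x') / N"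
      by (simp add: p q dist_gsc_map)
    ultimately show ?thesis by (simp add: divide_right_mono)
  qed
qed

text \<open>A non-corner \<open>b\<close> would make the fixed point of \<open>\<phi>\<^sub>a\<close> match \<open>y\<close>, hence equal to the
  preimage \<open>\<phi>\<^sub>a(x)\<close> of the overlap point; but one of its coordinates is extreme and the
  corresponding one of \<open>\<phi>\<^sub>a(x)\<close> is not.\<close>
lemma corner_digit_transfer:
  assumes "\<exists>p. overlap = {p}" and "a \<in> D" "b \<in> D" "subcells_meet a b"
    and corner: "corner_digit N a"
  shows "corner_digit N b"
  unfolding corner_digit_iff
proof
  fix k
  obtain x y where "x \<in> F" "y \<in> F"
    and meet: "gsc_map N i (gsc_map N a x) = gsc_map N j (gsc_map N b y)"
    using \<open>subcells_meet a b\<close> unfolding subcells_meet_iff by blast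
  then have "gsc_map N i (gsc_map N a x) \<in> overlap"
    by (intro level_two_point_mem_overlap[OF \<open>a \<in> D\<close> \<open>b \<in> D\<close>])
  moreover obtain p where p: "overlap = {p}" using assms(1) ..
  ultimately have overlap: "overlap = {gsc_map N i (gsc_map N a x)}" by simp
  note less = coord_digit_less[OF \<open>a \<in> D\<close>] coord_digit_less[OF \<open>b \<in> D\<close>]
  note unit = coord_mem_unit[OF \<open>x \<in> F\<close>] coord_mem_unit[OF \<open>y \<in> F\<close>]
  note eq = coord_level_two_eq[OF meet]
  show "coord k b \<in> {0, N - 1}"
  proof (cases "coord k i = coord k j")
    case False
    then show ?thesis
      using two_level_edge_coord[OF N less(1,2) unit(1,2) False eq[of k]] N
      by (auto simp: of_nat_diff split: if_splits)
  next
    case True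
    show ?thesis
    proof (rule ccontr)
      assume inner: "coord k b \<notin> {0, N - 1}"
      define c where "c = (\<not> k)"
      define z where "z = gsc_fixpoint N a"
      have "z \<in> F"
        unfolding z_def using gsc_fixpoint_mem[OF N compact_imp_closed[OF compact] nonempty
          equalityD1[OF self_similar] \<open>a \<in> D\<close>] .
      have "coord c i \<noteq> coord c j" unfolding c_def using coord_neq_other[OF distinct True] .
      from two_level_edge_coord[OF N less(1,2) unit(1,2) this eq[of c]]
      have edge: "coord c z + coord c i = coord c y + coord c j"
        using N by (auto simp: z_def coord_gsc_fixpoint split: if_splits)
      have "coord k x + coord k a = coord k y + coord k b"
        using eq[of k] True N_pos by (simp add: divide_cancel_right)
      moreover have "coord k a \<in> {0, N - 1}" using corner unfolding corner_digit_iff ..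
      ultimately have "coord k y = coord k a / (real N - 1)"
        and inner_point: "(coord k x + coord k a) / N \<notin> {0, 1}"
        using corner_next_to_inner_digit[OF N unit(1,2) _ less(2) inner] by blast+
      then have "coord k z = coord k y" by (simp add: z_def coord_gsc_fixpoint)
      with edge True have "\<forall>k'. coord k' z + coord k' i = coord k' y + coord k' j"
        unfolding c_def all_coord_iff[of _ k] by simp
      then have "z = gsc_map N a x" by (rule overlap_preimage[OF overlap \<open>z \<in> F\<close> \<open>y \<in> F\<close>])
      then have "coord k z = (coord k x + coord k a) / N" by (simp add: coord_gsc_map)
      moreover have "coord k z \<in> {0, 1}"
        using corner N unfolding corner_digit_iff by (auto simp: z_def coord_gsc_fixpoint of_nat_diff)
      ultimately show False using inner_point by simp
    qed
  qed
qed

lemma overlap_singleton_iff_unique_subcells: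
  "(\<exists>p. overlap = {p}) \<longleftrightarrow> (\<exists>!q. q \<in> D \<times> D \<and> subcells_meet (fst q) (snd q))"
proof
  assume "\<exists>p. overlap = {p}"
  then obtain p where "overlap = {p}" ..
  then show "\<exists>!q. q \<in> D \<times> D \<and> subcells_meet (fst q) (snd q)"
    by (rule unique_subcells_if_overlap_singleton)
next
  assume "\<exists>!q. q \<in> D \<times> D \<and> subcells_meet (fst q) (snd q)"
  then obtain q where q: "q \<in> D \<times> D \<and> subcells_meet (fst q) (snd q)"
    and unique: "\<forall>q'. q' \<in> D \<times> D \<and> subcells_meet (fst q') (snd q') \<longrightarrow> q' = q"
    by (elim ex1E)
  show "\<exists>p. overlap = {p}"
  proof (rule overlap_singleton_if_unique_subcells)
    show "fst q \<in> D" "snd q \<in> D" "subcells_meet (fst q) (snd q)" using q by auto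
    fix a' b' assume "a' \<in> D" "b' \<in> D" "subcells_meet a' b'"
    then have "(a', b') = q" using unique[rule_format, of "(a', b')"] by simp
    then show "a' = fst q \<and> b' = snd q" by auto
  qed
qed

end

theorem mainTheorem12:
  fixes N :: nat and D :: "(nat \<times> nat) set" and i j :: "nat \<times> nat"
  assumes "gsc_digits N D"
    and "connected (gsc_attractor N D)"
    and "i \<in> D" and "j \<in> D" and "i \<noteq> j"
  defines "F \<equiv> gsc_attractor N D"
  shows "((\<exists>p. gsc_map N i ` F \<inter> gsc_map N j ` F = {p}) \<longleftrightarrow>
           (\<exists>!q. q \<in> D \<times> D \<and>
              (gsc_map N i \<circ> gsc_map N (fst q)) ` F \<inter> (gsc_map N j \<circ> gsc_map N (snd q)) ` F \<noteq> {}))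
       \<and> ((\<exists>p. gsc_map N i ` F \<inter> gsc_map N j ` F = {p}) \<longrightarrow>
           (\<forall>i' j'. i' \<in> D \<and> j' \<in> D \<and>
              (gsc_map N i \<circ> gsc_map N i') ` F \<inter> (gsc_map N j \<circ> gsc_map N j') ` F \<noteq> {} \<and>
              corner_digit N i' \<longrightarrow> corner_digit N j'))"
proof -
  interpret gsc_pair N D F i j
    using assms(1,3-5) gsc_attractor_props[OF assms(1), folded F_def]
    by unfold_locales (auto simp: gsc_digits_def)
  show ?thesis
  proof (intro conjI impI allI)
    show "(\<exists>p. overlap = {p}) \<longleftrightarrow> (\<exists>!q. q \<in> D \<times> D \<and> subcells_meet (fst q) (snd q))"
      by (rule overlap_singleton_iff_unique_subcells)
    fix i' j'
    assume "\<exists>p. overlap = {p}" "i' \<in> D \<and> j' \<in> D \<and> subcells_meet i' j' \<and> corner_digit N i'"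
    then show "corner_digit N j'" by (elim conjE) (rule corner_digit_transfer)
  qed
qed

end
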